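(* Let $\Omega\subset\mathbb{R}^d$ be a bounded domain, $\sigma$, $u_*$, $F$ and $a$ as in the context, and $\varphi_0\in C^1(\overline{\Omega})$. Let $(v,\varphi)$ be a weak solution of the system $$\nabla\cdot(a(v)\nabla\varphi)=0,\qquad \nabla\cdot(a(v)\nabla v)+a(v)|\nabla\varphi|^2=0\quad\text{in }\Omega,$$ with $\frac{\partial v}{\partial n}+\frac{\beta}{a(v)}(F^{-1}(v)-u_1)=0$ on $\Gamma_R$, $v=F(u_0)$ on $\Gamma_D$, $\varphi=\varphi_0$ on $\partial\Omega$, and let $\psi:=(\varphi-\varphi_0)^2+v$. Then, in the weak sense in $\Omega$, $$\nabla\cdot(a(v)\nabla\psi)=a(v)|\nabla\varphi|^2-2\nabla\cdot\big((\varphi-\varphi_0)a(v)\nabla\varphi_0\big)-2a(v)\nabla\varphi\cdot\nabla\varphi_0,$$ and moreover $$-\nabla\cdot(a(v)\nabla\psi)\le a(v)|\nabla\varphi_0|^2+2\nabla\cdot\big((\varphi-\varphi_0)a(v)\nabla\varphi_0\big).$$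
   Context: $\sigma\in C^1([0,\infty))$ is nonnegative, $u_*\in(0,\infty]$, $\sigma(s)=0$ for $s\ge u_*$, $\sigma>0$ and monotone decreasing on $[0,u_* )$, $\|\sigma\|_{C^1([0,u_*])}\le\mu<\infty$, and $\int_0^{u_*}ds/\sigma(s)=\infty$. $F(u):=\int_0^u\frac{ds}{\sigma(s)}$ maps $[0,u_* )$ onto $[0,\infty)$, and $a(v):=\sigma(F^{-1}(v))$ for $v\ge0$. The boundary $\partial\Omega=\overline{\Gamma_D}\cup\overline{\Gamma_R}$, $\beta\ge0$ is a bounded function on $\Gamma_R$, $u_0,u_1$ are given nonnegative data, $n$ the outward unit normal. The differential identities are understood in the weak (integrated against test functions) sense. *)

theory Defs
  imports "HOL-Analysis.Analysis"
begin

text \<open>u_* ranges over (0, infinity], represented as an extended real.\<close>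

definition sigma_hyps :: "(real \<Rightarrow> real) \<Rightarrow> ereal \<Rightarrow> real \<Rightarrow> bool" where
  "sigma_hyps \<sigma> ustar \<mu> \<longleftrightarrow>
     0 < ustar \<and>
     (\<exists>\<sigma>'. continuous_on {0..} \<sigma>' \<and>
           (\<forall>s\<ge>0. (\<sigma> has_real_derivative \<sigma>' s) (at s within {0..})) \<and>
           (\<forall>s. 0 \<le> s \<and> ereal s \<le> ustar \<longrightarrow> \<bar>\<sigma> s\<bar> \<le> \<mu> \<and> \<bar>\<sigma>' s\<bar> \<le> \<mu>)) \<and>
     (\<forall>s\<ge>0. 0 \<le> \<sigma> s) \<and>
     (\<forall>s\<ge>0. ustar \<le> ereal s \<longrightarrow> \<sigma> s = 0) \<and>
     (\<forall>s\<ge>0. ereal s < ustar \<longrightarrow> 0 < \<sigma> s) \<and>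
     (\<forall>s t. 0 \<le> s \<and> s \<le> t \<and> ereal t < ustar \<longrightarrow> \<sigma> t \<le> \<sigma> s) \<and>
     (\<integral>\<^sup>+ s. indicator {s. 0 \<le> s \<and> ereal s < ustar} s * ennreal (1 / \<sigma> s) \<partial>lborel) = \<infinity>"

definition F_of :: "(real \<Rightarrow> real) \<Rightarrow> real \<Rightarrow> real" where
  "F_of \<sigma> u = (LBINT s=0..u. 1 / \<sigma> s)"

definition a_of :: "(real \<Rightarrow> real) \<Rightarrow> ereal \<Rightarrow> real \<Rightarrow> real" where
  "a_of \<sigma> ustar v = \<sigma> (the_inv_into {u. 0 \<le> u \<and> ereal u < ustar} (F_of \<sigma>) v)"

coinductive smooth_fun :: "('a::euclidean_space \<Rightarrow> real) \<Rightarrow> bool" where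
  "\<lbrakk> \<zeta> differentiable_on UNIV;
     \<forall>b\<in>Basis. smooth_fun (\<lambda>x. frechet_derivative \<zeta> (at x) b) \<rbrakk> \<Longrightarrow> smooth_fun \<zeta>"

definition grad :: "('a::euclidean_space \<Rightarrow> real) \<Rightarrow> 'a \<Rightarrow> 'a" where
  "grad \<zeta> x = (\<Sum>b\<in>Basis. frechet_derivative \<zeta> (at x) b *\<^sub>R b)"

definition test_fun :: "'a::euclidean_space set \<Rightarrow> ('a \<Rightarrow> real) \<Rightarrow> bool" where
  "test_fun \<Omega> \<zeta> \<longleftrightarrow> smooth_fun \<zeta> \<and> compact (closure {x. \<zeta> x \<noteq> 0}) \<and>
      closure {x. \<zeta> x \<noteq> 0} \<subseteq> \<Omega>"

definition weak_grad :: "'a::euclidean_space set \<Rightarrow> ('a \<Rightarrow> real) \<Rightarrow> ('a \<Rightarrow> 'a) \<Rightarrow> bool" where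
  "weak_grad \<Omega> f g \<longleftrightarrow>
     (\<forall>\<zeta>. test_fun \<Omega> \<zeta> \<longrightarrow>
        integrable (lebesgue_on \<Omega>) (\<lambda>x. f x *\<^sub>R grad \<zeta> x) \<and>
        integrable (lebesgue_on \<Omega>) (\<lambda>x. \<zeta> x *\<^sub>R g x) \<and>
        (\<integral>x. f x *\<^sub>R grad \<zeta> x \<partial>lebesgue_on \<Omega>) = - (\<integral>x. \<zeta> x *\<^sub>R g x \<partial>lebesgue_on \<Omega>))"

definition L2_on :: "'a::euclidean_space set \<Rightarrow> ('a \<Rightarrow> 'b::real_normed_vector) \<Rightarrow> bool" where
  "L2_on \<Omega> f \<longleftrightarrow> f \<in> borel_measurable (lebesgue_on \<Omega>) \<and>
     integrable (lebesgue_on \<Omega>) (\<lambda>x. (norm (f x))\<^sup>2)"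

definition H1_with_grad :: "'a::euclidean_space set \<Rightarrow> ('a \<Rightarrow> real) \<Rightarrow> ('a \<Rightarrow> 'a) \<Rightarrow> bool" where
  "H1_with_grad \<Omega> f g \<longleftrightarrow> L2_on \<Omega> f \<and> L2_on \<Omega> g \<and> weak_grad \<Omega> f g"

text \<open>f in H^1_0(Omega): H^1-limit of test functions (zero boundary trace).\<close>
definition H10_with_grad :: "'a::euclidean_space set \<Rightarrow> ('a \<Rightarrow> real) \<Rightarrow> ('a \<Rightarrow> 'a) \<Rightarrow> bool" where
  "H10_with_grad \<Omega> f g \<longleftrightarrow> H1_with_grad \<Omega> f g \<and>
     (\<exists>\<zeta>::nat \<Rightarrow> 'a \<Rightarrow> real. (\<forall>n. test_fun \<Omega> (\<zeta> n)) \<and>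
        (\<lambda>n. (\<integral>x. (\<zeta> n x - f x)\<^sup>2 + (norm (grad (\<zeta> n) x - g x))\<^sup>2 \<partial>lebesgue_on \<Omega>))
          \<longlonglongrightarrow> 0)"

definition C1_closure_with_grad :: "'a::euclidean_space set \<Rightarrow> ('a \<Rightarrow> real) \<Rightarrow> ('a \<Rightarrow> 'a) \<Rightarrow> bool" where
  "C1_closure_with_grad \<Omega> f Df \<longleftrightarrow> continuous_on (closure \<Omega>) f \<and> continuous_on (closure \<Omega>) Df \<and>
     (\<forall>x\<in>\<Omega>. (f has_derivative (\<lambda>h. Df x \<bullet> h)) (at x))"

end

theory Submission
  imports Defs
begin

text \<open>
  Put \<open>w = \<phi> - \<phi>\<^sub>0 \<in> H\<^sup>1\<^sub>0\<close>, so that \<open>\<psi> = w\<^sup>2 + v\<close>. Approximating \<open>w\<close> by test functions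
  \<open>z\<^sub>n\<close>, the products \<open>z\<^sub>n \<zeta>\<close> are test functions converging to \<open>w \<zeta>\<close> together with their
  gradients, and Cauchy-Schwarz in \<open>L\<^sup>2\<close> lets every weak identity pass to the limit. This gives
  the chain rule \<open>\<nabla>(w\<^sup>2) = 2 w \<nabla>w\<close> and makes \<open>w \<zeta>\<close> admissible in the \<open>\<phi>\<close>-equation:
  \<open>\<integral> a \<nabla>\<phi>\<cdot>(w \<nabla>\<zeta> + \<zeta> \<nabla>w) = 0\<close>. Combined with the \<open>v\<close>-equation
  \<open>\<integral> a \<nabla>v\<cdot>\<nabla>\<zeta> = \<integral> a |\<nabla>\<phi>|\<^sup>2 \<zeta>\<close> this is the equation for \<open>\<psi>\<close>; the inequality follows
  from \<open>|\<nabla>\<phi>|\<^sup>2 - 2 \<nabla>\<phi>\<cdot>\<nabla>\<phi>\<^sub>0 + |\<nabla>\<phi>\<^sub>0|\<^sup>2 = |\<nabla>w|\<^sup>2 \<ge> 0\<close> and \<open>a \<ge> 0\<close>.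
  The coefficient \<open>a = \<sigma> \<circ> F\<^sup>-\<^sup>1\<close> is measurable with \<open>0 < a \<le> \<mu>\<close> on \<open>[0, \<infinity>)\<close>, because \<open>F\<close>
  is a continuous increasing bijection from \<open>[0, u\<^sub>*)\<close> onto \<open>[0, \<infinity>)\<close>.
\<close>

definition below_ustar :: "ereal \<Rightarrow> real set" where
  "below_ustar ustar = {u. 0 \<le> u \<and> ereal u < ustar}"

lemma below_ustar_downward:
  "u \<in> below_ustar ustar \<Longrightarrow> 0 \<le> s \<Longrightarrow> s \<le> u \<Longrightarrow> s \<in> below_ustar ustar"
  unfolding below_ustar_def by (auto intro: le_less_trans[of "ereal s" "ereal u"])

context
  fixes \<sigma> :: "real \<Rightarrow> real" and ustar :: ereal and \<mu> :: real
  assumes sig: "sigma_hyps \<sigma> ustar \<mu>"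
begin

lemma sigma_hyps_derivative:
  obtains \<sigma>' where "\<And>s. 0 \<le> s \<Longrightarrow> (\<sigma> has_real_derivative \<sigma>' s) (at s within {0..})"
    "\<And>s. 0 \<le> s \<Longrightarrow> ereal s \<le> ustar \<Longrightarrow> \<bar>\<sigma> s\<bar> \<le> \<mu> \<and> \<bar>\<sigma>' s\<bar> \<le> \<mu>"
proof -
  from sig obtain \<sigma>' where
    "\<forall>s\<ge>0. (\<sigma> has_real_derivative \<sigma>' s) (at s within {0..})"
    "\<forall>s. 0 \<le> s \<and> ereal s \<le> ustar \<longrightarrow> \<bar>\<sigma> s\<bar> \<le> \<mu> \<and> \<bar>\<sigma>' s\<bar> \<le> \<mu>"
    unfolding sigma_hyps_def by (elim conjE exE) (intro that conjI)
  then show ?thesis using that by blast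
qed

lemma ustar_pos: "0 < ustar"
  using sig unfolding sigma_hyps_def by blast

lemma sigma_pos: "s \<in> below_ustar ustar \<Longrightarrow> 0 < \<sigma> s"
  using sig unfolding sigma_hyps_def below_ustar_def by blast

lemma sigma_vanishes: "0 \<le> s \<Longrightarrow> ustar \<le> ereal s \<Longrightarrow> \<sigma> s = 0"
  using sig unfolding sigma_hyps_def by blast

lemma sigma_le_mu: "s \<in> below_ustar ustar \<Longrightarrow> \<sigma> s \<le> \<mu>"
  using sigma_hyps_derivative[of "\<sigma> s \<le> \<mu>"] unfolding below_ustar_def by force

lemma zero_below_ustar: "0 \<in> below_ustar ustar"
  using ustar_pos unfolding below_ustar_def by (simp add: zero_ereal_def)

lemma mu_pos: "0 < \<mu>"
  using sigma_pos[OF zero_below_ustar] sigma_le_mu[OF zero_below_ustar] by linarith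

lemma continuous_on_sigma: "continuous_on {0..} \<sigma>"
proof -
  obtain \<sigma>' where "\<And>s. 0 \<le> s \<Longrightarrow> (\<sigma> has_real_derivative \<sigma>' s) (at s within {0..})"
    using sigma_hyps_derivative by blast
  then show ?thesis
    unfolding continuous_on_eq_continuous_within by (auto intro: DERIV_continuous)
qed

lemma sigma_le_dist_ustar:
  assumes r: "ustar = ereal r" and s: "0 \<le> s" "s \<le> r"
  shows "\<sigma> s \<le> \<mu> * (r - s)"
proof -
  obtain \<sigma>' where d: "\<And>s. 0 \<le> s \<Longrightarrow> (\<sigma> has_real_derivative \<sigma>' s) (at s within {0..})"
    and b: "\<And>s. 0 \<le> s \<Longrightarrow> ereal s \<le> ustar \<Longrightarrow> \<bar>\<sigma> s\<bar> \<le> \<mu> \<and> \<bar>\<sigma>' s\<bar> \<le> \<mu>"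
    using sigma_hyps_derivative by blast
  have "norm (\<sigma> r - \<sigma> s) \<le> \<mu> * norm (r - s)"
  proof (rule field_differentiable_bound[of "{0..r}"])
    fix z assume z: "z \<in> {0..r}"
    show "(\<sigma> has_field_derivative \<sigma>' z) (at z within {0..r})"
      using z by (intro DERIV_subset[OF d]) auto
    show "norm (\<sigma>' z) \<le> \<mu>" using b[of z] z r by auto
  qed (use s in auto)
  moreover have "\<sigma> r = 0" using sigma_vanishes[of r] r s by auto
  ultimately show ?thesis using s by simp
qed

lemma continuous_on_inverse_sigma:
  assumes u: "u \<in> below_ustar ustar"
  shows "continuous_on {0..u} (\<lambda>s. 1 / \<sigma> s)"
proof (rule continuous_on_divide)
  show "continuous_on {0..u} \<sigma>" by (rule continuous_on_subset[OF continuous_on_sigma]) auto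
  show "\<forall>s\<in>{0..u}. \<sigma> s \<noteq> 0" using below_ustar_downward[OF u] sigma_pos by force
qed auto

lemma F_of_eq_integral:
  "u \<in> below_ustar ustar \<Longrightarrow> F_of \<sigma> u = integral {0..u} (\<lambda>s. 1 / \<sigma> s)"
  unfolding F_of_def zero_ereal_def
  by (rule interval_integral_eq_integral)
    (auto simp: below_ustar_def intro!: borel_integrable_atLeastAtMost' continuous_on_inverse_sigma)

lemma F_of_0: "F_of \<sigma> 0 = 0"
  unfolding F_of_def zero_ereal_def by (rule interval_integral_endpoints_same)

lemma F_of_diff_ge:
  assumes x: "x \<in> below_ustar ustar" and x': "x' \<in> below_ustar ustar" and le: "x \<le> x'"
  shows "(x' - x) / \<mu> \<le> F_of \<sigma> x' - F_of \<sigma> x"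
proof -
  have x0: "0 \<le> x" using x by (simp add: below_ustar_def)
  have int: "(\<lambda>s. 1 / \<sigma> s) integrable_on {0..x'}"
    using continuous_on_inverse_sigma[OF x'] integrable_continuous_real by blast
  have "integral {0..x} (\<lambda>s. 1 / \<sigma> s) + integral {x..x'} (\<lambda>s. 1 / \<sigma> s)
      = integral {0..x'} (\<lambda>s. 1 / \<sigma> s)"
    by (rule Henstock_Kurzweil_Integration.integral_combine[OF x0 le int])
  moreover have "integral {x..x'} (\<lambda>s. 1 / \<mu>) \<le> integral {x..x'} (\<lambda>s. 1 / \<sigma> s)"
  proof (rule integral_le)
    show "(\<lambda>s. 1 / \<sigma> s) integrable_on {x..x'}"
      using integrable_on_subinterval[OF int] x0 by auto
    fix s assume "s \<in> {x..x'}"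
    then have "s \<in> below_ustar ustar" using below_ustar_downward[OF x'] x0 by auto
    then show "1 / \<mu> \<le> 1 / \<sigma> s" using sigma_pos sigma_le_mu by (simp add: frac_le)
  qed auto
  ultimately show ?thesis using F_of_eq_integral[OF x] F_of_eq_integral[OF x'] le by simp
qed

lemma F_of_strict_mono: "strict_mono_on (below_ustar ustar) (F_of \<sigma>)"
proof (rule strict_mono_onI)
  fix x x' assume "x \<in> below_ustar ustar" "x' \<in> below_ustar ustar" "x < x'"
  moreover have "0 < (x' - x) / \<mu>" using \<open>x < x'\<close> mu_pos by simp
  ultimately show "F_of \<sigma> x < F_of \<sigma> x'" using F_of_diff_ge[of x x'] by linarith
qed

lemma F_of_nonneg: "x \<in> below_ustar ustar \<Longrightarrow> 0 \<le> F_of \<sigma> x"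
proof -
  assume x: "x \<in> below_ustar ustar"
  then have "0 \<le> x / \<mu>" using mu_pos by (simp add: below_ustar_def)
  with F_of_diff_ge[OF zero_below_ustar x] x show ?thesis by (simp add: F_of_0 below_ustar_def)
qed

lemma continuous_on_F_of: "u \<in> below_ustar ustar \<Longrightarrow> continuous_on {0..u} (F_of \<sigma>)"
  using indefinite_integral_continuous_1[OF integrable_continuous_real[OF continuous_on_inverse_sigma]]
  by (rule continuous_on_eq) (auto simp: F_of_eq_integral dest: below_ustar_downward)

text \<open>For finite \<open>u\<^sub>*\<close> unboundedness comes from the Lipschitz bound
  \<open>\<sigma> s \<le> \<mu> (u\<^sub>* - s)\<close>.\<close>
lemma F_of_unbounded:
  assumes y: "0 \<le> y"
  obtains x where "x \<in> below_ustar ustar" "y \<le> F_of \<sigma> x"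
proof (cases ustar)
  case PInf
  then have x: "y * \<mu> \<in> below_ustar ustar" using y mu_pos by (simp add: below_ustar_def)
  moreover have "y \<le> F_of \<sigma> (y * \<mu>)"
    using F_of_diff_ge[OF zero_below_ustar x] mu_pos y by (simp add: F_of_0)
  ultimately show ?thesis by (rule that)
next
  case MInf
  then show ?thesis using ustar_pos by simp
next
  case (real r)
  have r0: "0 < r" using ustar_pos real by (simp add: zero_ereal_def)
  txt \<open>\<open>x\<close> is where the primitive of the lower bound \<open>1 / (\<mu> (r - s))\<close> of \<open>1/\<sigma>\<close> reaches \<open>y\<close>.\<close>
  define x where "x = r - r * exp (- \<mu> * y)"
  have ex: "0 < exp (- \<mu> * y)" "exp (- \<mu> * y) \<le> 1" using y mu_pos by auto
  have x0: "0 \<le> x" and xr: "x < r" using ex r0 by (auto simp: x_def mult_le_cancel_left1)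
  have xA: "x \<in> below_ustar ustar" using x0 xr real by (simp add: below_ustar_def)
  have hi: "((\<lambda>s. 1 / (\<mu> * (r - s))) has_integral (- ln (r - x) / \<mu> - - ln (r - 0) / \<mu>)) {0..x}"
  proof (rule fundamental_theorem_of_calculus[OF x0])
    fix t assume "t \<in> {0..x}"
    then have "t < r" using xr by auto
    then show "((\<lambda>s. - ln (r - s) / \<mu>) has_vector_derivative 1 / (\<mu> * (r - t))) (at t within {0..x})"
      using mu_pos by (auto intro!: derivative_eq_intros
          simp: field_simps has_real_derivative_iff_has_vector_derivative[symmetric])
  qed
  have "- ln (r - x) / \<mu> - - ln (r - 0) / \<mu> = y"
    using r0 mu_pos by (simp add: x_def ln_mult field_simps)
  then have "y = integral {0..x} (\<lambda>s. 1 / (\<mu> * (r - s)))" using hi by (simp add: integral_unique)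
  also have "\<dots> \<le> integral {0..x} (\<lambda>s. 1 / \<sigma> s)"
  proof (rule integral_le)
    show "(\<lambda>s. 1 / (\<mu> * (r - s))) integrable_on {0..x}" using hi by blast
    show "(\<lambda>s. 1 / \<sigma> s) integrable_on {0..x}"
      using continuous_on_inverse_sigma[OF xA] integrable_continuous_real by blast
    fix s assume s: "s \<in> {0..x}"
    then have "0 < \<sigma> s" using below_ustar_downward[OF xA] sigma_pos by auto
    moreover have "\<sigma> s \<le> \<mu> * (r - s)" using sigma_le_dist_ustar[OF real, of s] s xr by auto
    ultimately show "1 / (\<mu> * (r - s)) \<le> 1 / \<sigma> s" by (simp add: frac_le)
  qed
  finally show ?thesis using that xA F_of_eq_integral[OF xA] by simp
qed

lemma F_of_image: "{0..} \<subseteq> F_of \<sigma> ` below_ustar ustar"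
proof
  fix y :: real assume "y \<in> {0..}"
  then have y: "0 \<le> y" by simp
  obtain x where x: "x \<in> below_ustar ustar" "y \<le> F_of \<sigma> x" using F_of_unbounded[OF y] by blast
  have "\<exists>t. 0 \<le> t \<and> t \<le> x \<and> F_of \<sigma> t = y"
    by (rule IVT') (use y x F_of_0 continuous_on_F_of[OF x(1)] in \<open>auto simp: below_ustar_def\<close>)
  then show "y \<in> F_of \<sigma> ` below_ustar ustar" using below_ustar_downward[OF x(1)] by force
qed

abbreviation F_inv :: "real \<Rightarrow> real" where
  "F_inv \<equiv> the_inv_into (below_ustar ustar) (F_of \<sigma>)"

lemma a_of_eq: "a_of \<sigma> ustar = \<sigma> \<circ> F_inv"
  by (auto simp: a_of_def below_ustar_def)

lemma F_inv_in_below_ustar: "0 \<le> y \<Longrightarrow> F_inv y \<in> below_ustar ustar"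
  using F_of_image by (auto intro!: the_inv_into_into strict_mono_on_imp_inj_on[OF F_of_strict_mono])

lemma F_of_F_inv: "0 \<le> y \<Longrightarrow> F_of \<sigma> (F_inv y) = y"
  using F_of_image by (auto intro!: f_the_inv_into_f strict_mono_on_imp_inj_on[OF F_of_strict_mono])

lemma F_inv_mono: "0 \<le> y \<Longrightarrow> y \<le> y' \<Longrightarrow> F_inv y \<le> F_inv y'"
proof (rule ccontr)
  assume "0 \<le> y" "y \<le> y'" "\<not> F_inv y \<le> F_inv y'"
  then have "F_of \<sigma> (F_inv y') < F_of \<sigma> (F_inv y)"
    using F_inv_in_below_ustar by (intro strict_mono_onD[OF F_of_strict_mono]) auto
  with \<open>0 \<le> y\<close> \<open>y \<le> y'\<close> show False by (simp add: F_of_F_inv)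
qed

lemma a_of_pos: "0 \<le> y \<Longrightarrow> 0 < a_of \<sigma> ustar y"
  by (simp add: a_of_eq sigma_pos F_inv_in_below_ustar)

lemma a_of_le_mu: "0 \<le> y \<Longrightarrow> a_of \<sigma> ustar y \<le> \<mu>"
  by (simp add: a_of_eq sigma_le_mu F_inv_in_below_ustar)

lemma F_inv_neg: "y < 0 \<Longrightarrow> F_inv y = (THE x. False)"
proof -
  assume "y < 0"
  then have "(\<lambda>x. x \<in> below_ustar ustar \<and> F_of \<sigma> x = y) = (\<lambda>x. False)"
    using F_of_nonneg by fastforce
  then show ?thesis by (simp add: the_inv_into_def)
qed

lemma a_of_measurable: "a_of \<sigma> ustar \<in> borel_measurable borel"
proof -
  have "mono (\<lambda>y. F_inv (max 0 y))" by (rule monoI) (simp add: F_inv_mono)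
  then have [measurable]: "(\<lambda>y. F_inv (max 0 y)) \<in> borel_measurable borel"
    by (rule borel_measurable_mono)
  have "continuous_on UNIV (\<lambda>z. \<sigma> (max 0 z))"
    by (rule continuous_on_compose2[OF continuous_on_sigma continuous_on_max[OF continuous_on_const continuous_on_id]])
      auto
  then have [measurable]: "(\<lambda>z. \<sigma> (max 0 z)) \<in> borel_measurable borel"
    by (rule borel_measurable_continuous_onI)
  have "a_of \<sigma> ustar y = (if y < 0 then \<sigma> (THE x. False) else \<sigma> (max 0 (F_inv (max 0 y))))" for y
  proof (cases "y < 0")
    case False
    then show ?thesis using F_inv_in_below_ustar[of y] by (simp add: a_of_eq below_ustar_def)
  qed (simp add: a_of_eq F_inv_neg)
  then have eq: "a_of \<sigma> ustar = (\<lambda>y. if y < 0 then \<sigma> (THE x. False) else \<sigma> (max 0 (F_inv (max 0 y))))"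
    by (rule ext)
  show ?thesis unfolding eq by measurable
qed

end

lemma smooth_fun_differentiable_on: "smooth_fun f \<Longrightarrow> f differentiable_on UNIV"
  by (erule smooth_fun.cases) simp

lemma smooth_fun_partial:
  "smooth_fun f \<Longrightarrow> b \<in> Basis \<Longrightarrow> smooth_fun (\<lambda>x. frechet_derivative f (at x) b)"
  by (erule smooth_fun.cases) simp

lemma smooth_fun_has_derivative:
  "smooth_fun f \<Longrightarrow> (f has_derivative frechet_derivative f (at x)) (at x)"
  using smooth_fun_differentiable_on frechet_derivative_works
  unfolding differentiable_on_def by blast

lemma smooth_fun_continuous_on: "smooth_fun f \<Longrightarrow> continuous_on UNIV f"
  by (rule differentiable_imp_continuous_on[OF smooth_fun_differentiable_on])

lemma continuous_on_grad: "smooth_fun f \<Longrightarrow> continuous_on UNIV (grad f)"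
  unfolding grad_def[abs_def]
  by (intro continuous_intros smooth_fun_continuous_on smooth_fun_partial)

lemma has_derivative_sum_list_mult:
  assumes "\<forall>p\<in>set ps. smooth_fun (fst p) \<and> smooth_fun (snd p)"
  shows "((\<lambda>x. \<Sum>p\<leftarrow>ps. fst p x * snd p x) has_derivative
     (\<lambda>h. \<Sum>p\<leftarrow>ps. frechet_derivative (fst p) (at x) h * snd p x
                    + fst p x * frechet_derivative (snd p) (at x) h)) (at x)"
  using assms
proof (induction ps)
  case (Cons p ps)
  have "((\<lambda>x. fst p x * snd p x) has_derivative
     (\<lambda>h. fst p x * frechet_derivative (snd p) (at x) h + frechet_derivative (fst p) (at x) h * snd p x)) (at x)"
    using Cons.prems by (intro has_derivative_mult smooth_fun_has_derivative) auto
  from has_derivative_add[OF this Cons.IH] Cons.prems show ?case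
    by (simp add: algebra_simps)
qed simp

text \<open>Sums of products are closed under taking partial derivatives, which makes
  them the right invariant for coinduction.\<close>
lemma smooth_fun_sum_list_mult:
  assumes "\<forall>p\<in>set ps. smooth_fun (fst p) \<and> smooth_fun (snd p)"
  shows "smooth_fun (\<lambda>x. \<Sum>p\<leftarrow>ps. fst p x * snd p x)"
  using assms
proof (coinduction arbitrary: ps rule: smooth_fun.coinduct)
  case (smooth_fun ps)
  let ?h = "\<lambda>x. \<Sum>p\<leftarrow>ps. fst p x * snd p x"
  note Dh = has_derivative_sum_list_mult[OF smooth_fun]
  have "?h differentiable_on UNIV"
    unfolding differentiable_on_def differentiable_def using Dh by blast
  moreover have "\<exists>ps'. (\<lambda>x. frechet_derivative ?h (at x) b) = (\<lambda>x. \<Sum>p\<leftarrow>ps'. fst p x * snd p x)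
     \<and> (\<forall>p\<in>set ps'. smooth_fun (fst p) \<and> smooth_fun (snd p))" if b: "b \<in> Basis" for b
  proof (intro exI conjI)
    let ?ps' = "map (\<lambda>p. (\<lambda>x. frechet_derivative (fst p) (at x) b, snd p)) ps
              @ map (\<lambda>p. (fst p, \<lambda>x. frechet_derivative (snd p) (at x) b)) ps"
    show "(\<lambda>x. frechet_derivative ?h (at x) b) = (\<lambda>x. \<Sum>p\<leftarrow>?ps'. fst p x * snd p x)"
      by (simp add: frechet_derivative_at[OF Dh, symmetric] sum_list_addf o_def)
    show "\<forall>p\<in>set ?ps'. smooth_fun (fst p) \<and> smooth_fun (snd p)"
      using smooth_fun smooth_fun_partial[OF _ b] by auto
  qed
  ultimately show ?case by blast
qed

lemma smooth_fun_mult: "smooth_fun f \<Longrightarrow> smooth_fun g \<Longrightarrow> smooth_fun (\<lambda>x. f x * g x)"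
  using smooth_fun_sum_list_mult[of "[(f, g)]"] by simp

lemma grad_mult:
  assumes "smooth_fun f" and "smooth_fun g"
  shows "grad (\<lambda>x. f x * g x) x = f x *\<^sub>R grad g x + g x *\<^sub>R grad f x"
proof -
  have "frechet_derivative (\<lambda>x. f x * g x) (at x) =
     (\<lambda>h. f x * frechet_derivative g (at x) h + frechet_derivative f (at x) h * g x)"
    using assms by (intro frechet_derivative_at[symmetric] has_derivative_mult smooth_fun_has_derivative)
  then show ?thesis
    unfolding grad_def by (simp add: sum.distrib scaleR_sum_right algebra_simps)
qed

lemma test_fun_mult:
  assumes f: "test_fun \<Omega> f" and g: "test_fun \<Omega> g"
  shows "test_fun \<Omega> (\<lambda>x. f x * g x)"
proof -
  have sub: "closure {x. f x * g x \<noteq> 0} \<subseteq> closure {x. f x \<noteq> 0}"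
    by (rule closure_mono) auto
  moreover have "compact (closure {x. f x \<noteq> 0})" using f unfolding test_fun_def by blast
  ultimately have "compact (closure {x. f x * g x \<noteq> 0})"
    using compact_Int_closed[of "closure {x. f x \<noteq> 0}" "closure {x. f x * g x \<noteq> 0}"]
    by (simp add: Int_absorb1)
  then show ?thesis using f g sub smooth_fun_mult unfolding test_fun_def by blast
qed

lemma smooth_fun_bounded_on:
  assumes "smooth_fun f" and "bounded S"
  obtains C where "\<And>x. x \<in> S \<Longrightarrow> \<bar>f x\<bar> \<le> C \<and> norm (grad f x) \<le> C"
proof -
  have K: "compact (closure S)" using assms(2) by simp
  obtain C1 where C1: "\<And>x. x \<in> closure S \<Longrightarrow> norm (f x) \<le> C1"
    using compact_imp_bounded[OF compact_continuous_image[OF continuous_on_subset[OF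
          smooth_fun_continuous_on[OF assms(1)]] K]] unfolding bounded_iff by blast
  obtain C2 where C2: "\<And>x. x \<in> closure S \<Longrightarrow> norm (grad f x) \<le> C2"
    using compact_imp_bounded[OF compact_continuous_image[OF continuous_on_subset[OF
          continuous_on_grad[OF assms(1)]] K]] unfolding bounded_iff by blast
  show ?thesis
  proof (rule that[of "max C1 C2"])
    fix x assume "x \<in> S"
    then show "\<bar>f x\<bar> \<le> max C1 C2 \<and> norm (grad f x) \<le> max C1 C2"
      using C1[of x] C2[of x] closure_subset by fastforce
  qed
qed

lemma smooth_fun_measurable:
  assumes "smooth_fun f" and "S \<in> sets lebesgue"
  shows "f \<in> borel_measurable (lebesgue_on S)" "grad f \<in> borel_measurable (lebesgue_on S)"
proof -
  have "continuous_on S f" "continuous_on S (grad f)"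
    using assms(1) smooth_fun_continuous_on continuous_on_grad continuous_on_subset by blast+
  then show "f \<in> borel_measurable (lebesgue_on S)" "grad f \<in> borel_measurable (lebesgue_on S)"
    using continuous_imp_measurable_on_sets_lebesgue assms(2) by blast+
qed

definition square_integrable :: "'x measure \<Rightarrow> ('x \<Rightarrow> 'b::real_normed_vector) \<Rightarrow> bool" where
  "square_integrable M f \<longleftrightarrow> f \<in> borel_measurable M \<and> integrable M (\<lambda>x. (norm (f x))\<^sup>2)"

lemma square_integrable_integrable: "square_integrable M f \<Longrightarrow> integrable M (\<lambda>x. (norm (f x))\<^sup>2)"
  by (simp add: square_integrable_def)

lemma square_integrable_dominated:
  fixes f :: "'x \<Rightarrow> 'b::real_normed_vector" and h :: "'x \<Rightarrow> 'c::real_normed_vector"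
  assumes "square_integrable M f" and "h \<in> borel_measurable M"
    and "AE x in M. norm (h x) \<le> C * norm (f x)"
  shows "square_integrable M h"
  unfolding square_integrable_def
proof
  show "integrable M (\<lambda>x. (norm (h x))\<^sup>2)"
  proof (rule Bochner_Integration.integrable_bound)
    show "integrable M (\<lambda>x. C\<^sup>2 * (norm (f x))\<^sup>2)"
      using square_integrable_integrable[OF assms(1)] by simp
    show "AE x in M. norm ((norm (h x))\<^sup>2) \<le> norm (C\<^sup>2 * (norm (f x))\<^sup>2)"
      using assms(3) by eventually_elim (simp add: power_mono power_mult_distrib[symmetric])
  qed (use assms(2) in measurable)
qed fact

lemma square_integrable_bounded:
  fixes f :: "'x \<Rightarrow> 'b::real_normed_vector"
  assumes "finite_measure M" and "f \<in> borel_measurable M" and "AE x in M. norm (f x) \<le> C"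
  shows "square_integrable M f"
  unfolding square_integrable_def
proof
  show "integrable M (\<lambda>x. (norm (f x))\<^sup>2)"
  proof (rule finite_measure.integrable_const_bound[OF assms(1), where B = "C\<^sup>2"])
    show "AE x in M. norm ((norm (f x))\<^sup>2) \<le> C\<^sup>2"
      using assms(3) by eventually_elim (simp add: power_mono)
  qed (use assms(2) in measurable)
qed fact

lemma square_integrable_add:
  fixes f g :: "'x \<Rightarrow> 'b::{real_normed_vector, second_countable_topology}"
  assumes f: "square_integrable M f" and g: "square_integrable M g"
  shows "square_integrable M (\<lambda>x. f x + g x)"
proof -
  have I: "integrable M (\<lambda>x. 2 * (norm (f x))\<^sup>2 + 2 * (norm (g x))\<^sup>2)"
    using square_integrable_integrable[OF f] square_integrable_integrable[OF g] by simp
  have "(norm (u + v))\<^sup>2 \<le> 2 * (norm u)\<^sup>2 + 2 * (norm v)\<^sup>2" for u v :: 'b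
  proof -
    have "(norm (u + v))\<^sup>2 \<le> (norm u + norm v)\<^sup>2"
      by (intro power_mono norm_triangle_ineq) simp
    also have "\<dots> \<le> 2 * (norm u)\<^sup>2 + 2 * (norm v)\<^sup>2"
      using sum_squares_bound[of "norm u" "norm v"] by (simp add: power2_sum)
    finally show ?thesis .
  qed
  moreover have [measurable]: "f \<in> borel_measurable M" "g \<in> borel_measurable M"
    using f g by (auto simp: square_integrable_def)
  ultimately show ?thesis
    unfolding square_integrable_def
    by (intro conjI Bochner_Integration.integrable_bound[OF I] AE_I2) simp_all
qed

lemma square_integrable_diff:
  fixes f g :: "'x \<Rightarrow> 'b::{real_normed_vector, second_countable_topology}"
  assumes "square_integrable M f" and "square_integrable M g"
  shows "square_integrable M (\<lambda>x. f x - g x)"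
proof -
  have "square_integrable M (\<lambda>x. - g x)"
    using assms(2) unfolding square_integrable_def by simp
  from square_integrable_add[OF assms(1) this] show ?thesis by simp
qed

lemma integrable_dominated_by_product:
  fixes F :: "'x \<Rightarrow> 'b::{banach, second_countable_topology}"
    and p :: "'x \<Rightarrow> 'c::real_normed_vector" and q :: "'x \<Rightarrow> 'd::real_normed_vector"
  assumes "F \<in> borel_measurable M" and "square_integrable M p" and "square_integrable M q"
    and "AE x in M. norm (F x) \<le> norm (p x) * norm (q x)"
  shows "integrable M F"
proof (rule Bochner_Integration.integrable_bound[OF _ assms(1)])
  show "integrable M (\<lambda>x. (norm (p x))\<^sup>2 + (norm (q x))\<^sup>2)"
    using assms(2,3) by (simp add: square_integrable_def)
  show "AE x in M. norm (F x) \<le> norm ((norm (p x))\<^sup>2 + (norm (q x))\<^sup>2)"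
    using assms(4)
  proof eventually_elim
    case (elim x)
    then have "norm (F x) \<le> (norm (p x))\<^sup>2 + (norm (q x))\<^sup>2"
      using sum_squares_bound[of "norm (p x)" "norm (q x)"]
        mult_nonneg_nonneg[OF norm_ge_zero norm_ge_zero, of "p x" "q x"] by linarith
    then show ?case by simp
  qed
qed

lemma integrable_inner:
  fixes P Q :: "'x \<Rightarrow> 'b::{real_inner, second_countable_topology}"
  assumes "square_integrable M P" and "square_integrable M Q"
  shows "integrable M (\<lambda>x. P x \<bullet> Q x)"
proof (rule integrable_dominated_by_product[OF _ assms])
  show "(\<lambda>x. P x \<bullet> Q x) \<in> borel_measurable M"
    using assms unfolding square_integrable_def by (intro borel_measurable_inner) auto
qed (simp add: Cauchy_Schwarz_ineq2)

lemma le_sqrt_mult_if_le_weighted_means: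
  fixes I F G :: real
  assumes le: "\<And>d. 0 < d \<Longrightarrow> I \<le> (F / d + d * G) / 2" and "0 \<le> F" "0 \<le> G"
  shows "I \<le> sqrt F * sqrt G"
proof (cases "F = 0 \<or> G = 0")
  case True
  have "I \<le> 0 + e" if e: "0 < e" for e
  proof (cases "F = 0")
    case True
    have "I \<le> (e / (G + 1)) * G / 2" using le[of "e / (G + 1)"] e \<open>0 \<le> G\<close> True by simp
    also have "\<dots> \<le> e" using e \<open>0 \<le> G\<close> by (simp add: field_simps)
    finally show ?thesis by simp
  next
    case False
    then have "G = 0" using \<open>F = 0 \<or> G = 0\<close> by simp
    have "I \<le> F / ((F + 1) / e) / 2" using le[of "(F + 1) / e"] e \<open>0 \<le> F\<close> \<open>G = 0\<close> by simp
    also have "\<dots> \<le> e" using e \<open>0 \<le> F\<close> by (simp add: field_simps)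
    finally show ?thesis by simp
  qed
  then show ?thesis using True by (auto intro: field_le_epsilon)
next
  case False
  define a b where "a = sqrt F" and "b = sqrt G"
  have ab: "0 < a" "0 < b" "F = a * a" "G = b * b"
    using False assms(2,3) by (auto simp: a_def b_def)
  have "0 < a / b" using ab by simp
  then have "I \<le> (F / (a / b) + a / b * G) / 2" by (rule le)
  also have "F / (a / b) = a * b" using ab by (simp add: field_simps)
  also have "a / b * G = a * b" using ab by (simp add: field_simps)
  finally show ?thesis by (simp add: a_def b_def)
qed

lemma abs_mult_le_weighted_mean:
  fixes a b d :: real
  assumes "0 < d"
  shows "\<bar>a\<bar> * \<bar>b\<bar> \<le> (a\<^sup>2 / d + d * b\<^sup>2) / 2"
proof -
  have "0 \<le> (\<bar>a\<bar> - d * \<bar>b\<bar>)\<^sup>2" by simp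
  then have "2 * d * (\<bar>a\<bar> * \<bar>b\<bar>) \<le> a\<^sup>2 + d\<^sup>2 * b\<^sup>2"
    by (simp add: power2_diff algebra_simps)
  with assms show ?thesis by (simp add: field_simps power2_eq_square)
qed

lemma integral_abs_mult_le_Cauchy_Schwarz:
  fixes f g :: "'x \<Rightarrow> real"
  assumes f: "square_integrable M f" and g: "square_integrable M g"
  shows "(\<integral>x. \<bar>f x\<bar> * \<bar>g x\<bar> \<partial>M) \<le> sqrt (\<integral>x. (f x)\<^sup>2 \<partial>M) * sqrt (\<integral>x. (g x)\<^sup>2 \<partial>M)"
proof (rule le_sqrt_mult_if_le_weighted_means)
  fix d :: real assume d: "0 < d"
  have If: "integrable M (\<lambda>x. (f x)\<^sup>2)" and Ig: "integrable M (\<lambda>x. (g x)\<^sup>2)"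
    using f g by (simp_all add: square_integrable_def)
  have "integrable M (\<lambda>x. \<bar>f x\<bar> * \<bar>g x\<bar>)"
    using f g by (intro integrable_dominated_by_product[OF _ f g]) (auto simp: square_integrable_def)
  then have "(\<integral>x. \<bar>f x\<bar> * \<bar>g x\<bar> \<partial>M) \<le> (\<integral>x. ((f x)\<^sup>2 / d + d * (g x)\<^sup>2) / 2 \<partial>M)"
    using If Ig d by (intro integral_mono abs_mult_le_weighted_mean) auto
  also have "\<dots> = ((\<integral>x. (f x)\<^sup>2 \<partial>M) / d + d * (\<integral>x. (g x)\<^sup>2 \<partial>M)) / 2"
    using If Ig by simp
  finally show "(\<integral>x. \<bar>f x\<bar> * \<bar>g x\<bar> \<partial>M) \<le> ((\<integral>x. (f x)\<^sup>2 \<partial>M) / d + d * (\<integral>x. (g x)\<^sup>2 \<partial>M)) / 2" .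
qed simp_all

lemma tendsto_integral_L2_dominated:
  fixes f :: "nat \<Rightarrow> 'x \<Rightarrow> 'b::{banach, second_countable_topology}" and s :: "nat \<Rightarrow> 'x \<Rightarrow> real"
  assumes f: "\<And>n. integrable M (f n)" and g: "g \<in> borel_measurable M"
    and s: "\<And>n. square_integrable M (s n)" and s_lim: "(\<lambda>n. \<integral>x. (s n x)\<^sup>2 \<partial>M) \<longlonglongrightarrow> 0"
    and k: "square_integrable M k" and dom: "\<And>n. AE x in M. norm (f n x - g x) \<le> s n x * k x"
  shows "integrable M g" and "(\<lambda>n. \<integral>x. f n x \<partial>M) \<longlonglongrightarrow> (\<integral>x. g x \<partial>M)"
proof -
  have fg: "integrable M (\<lambda>x. f n x - g x)" for n
  proof (rule integrable_dominated_by_product[OF _ s k])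
    show "(\<lambda>x. f n x - g x) \<in> borel_measurable M" using f[of n] g by measurable
    show "AE x in M. norm (f n x - g x) \<le> norm (s n x) * norm (k x)"
      using dom[of n] by eventually_elim (simp add: abs_mult[symmetric])
  qed
  have "integrable M (\<lambda>x. f 0 x - (f 0 x - g x))"
    using f fg by (rule Bochner_Integration.integrable_diff)
  then show gi: "integrable M g" by simp
  have bound: "norm ((\<integral>x. f n x \<partial>M) - (\<integral>x. g x \<partial>M))
      \<le> sqrt (\<integral>x. (s n x)\<^sup>2 \<partial>M) * sqrt (\<integral>x. (k x)\<^sup>2 \<partial>M)" for n
  proof -
    have "norm ((\<integral>x. f n x \<partial>M) - (\<integral>x. g x \<partial>M)) = norm (\<integral>x. f n x - g x \<partial>M)"
      using f gi by simp
    also have "\<dots> \<le> (\<integral>x. norm (f n x - g x) \<partial>M)" by (rule integral_norm_bound)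
    also have "\<dots> \<le> (\<integral>x. \<bar>s n x\<bar> * \<bar>k x\<bar> \<partial>M)"
    proof (rule integral_mono_AE)
      show "integrable M (\<lambda>x. \<bar>s n x\<bar> * \<bar>k x\<bar>)"
        using s[of n] k by (intro integrable_dominated_by_product[OF _ s k])
          (auto simp: square_integrable_def)
      show "AE x in M. norm (f n x - g x) \<le> \<bar>s n x\<bar> * \<bar>k x\<bar>"
        using dom[of n] by eventually_elim (metis abs_ge_self abs_mult order_trans)
    qed (use fg in simp)
    also have "\<dots> \<le> sqrt (\<integral>x. (s n x)\<^sup>2 \<partial>M) * sqrt (\<integral>x. (k x)\<^sup>2 \<partial>M)"
      by (rule integral_abs_mult_le_Cauchy_Schwarz[OF s k])
    finally show ?thesis .
  qed
  have "(\<lambda>n. sqrt (\<integral>x. (s n x)\<^sup>2 \<partial>M) * sqrt (\<integral>x. (k x)\<^sup>2 \<partial>M)) \<longlonglongrightarrow> 0"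
    using tendsto_mult_left_zero[OF tendsto_real_sqrt[OF s_lim, unfolded real_sqrt_zero]] .
  then have "(\<lambda>n. (\<integral>x. f n x \<partial>M) - (\<integral>x. g x \<partial>M)) \<longlonglongrightarrow> 0"
    by (rule Lim_null_comparison[OF always_eventually[OF allI[OF bound]]])
  then show "(\<lambda>n. \<integral>x. f n x \<partial>M) \<longlonglongrightarrow> (\<integral>x. g x \<partial>M)" by (rule LIM_zero_cancel)
qed

lemma weak_grad_add:
  assumes "weak_grad \<Omega> f Df" and "weak_grad \<Omega> g Dg"
  shows "weak_grad \<Omega> (\<lambda>x. f x + g x) (\<lambda>x. Df x + Dg x)"
  using assms unfolding weak_grad_def by (simp add: scaleR_add_left scaleR_add_right)

definition weakly_divergence_free :: "'a::euclidean_space set \<Rightarrow> ('a \<Rightarrow> 'a) \<Rightarrow> bool" where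
  "weakly_divergence_free \<Omega> B \<longleftrightarrow>
     (\<forall>\<zeta>. test_fun \<Omega> \<zeta> \<longrightarrow> (\<integral>x. B x \<bullet> grad \<zeta> x \<partial>lebesgue_on \<Omega>) = 0)"

lemma square_integrable_scaleR_bounded_left:
  fixes c :: "'x \<Rightarrow> real" and f :: "'x \<Rightarrow> 'b::{real_normed_vector, second_countable_topology}"
  assumes "square_integrable M f" and "c \<in> borel_measurable M" and "AE x in M. \<bar>c x\<bar> \<le> C"
  shows "square_integrable M (\<lambda>x. c x *\<^sub>R f x)"
proof (rule square_integrable_dominated[OF assms(1)])
  show "(\<lambda>x. c x *\<^sub>R f x) \<in> borel_measurable M"
    using assms(1,2) unfolding square_integrable_def by (intro borel_measurable_scaleR) auto
  show "AE x in M. norm (c x *\<^sub>R f x) \<le> C * norm (f x)"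
    using assms(3) by eventually_elim (simp add: mult_right_mono)
qed

lemma square_integrable_scaleR_bounded_right:
  fixes c :: "'x \<Rightarrow> real" and f :: "'x \<Rightarrow> 'b::{real_normed_vector, second_countable_topology}"
  assumes "square_integrable M c" and "f \<in> borel_measurable M" and "AE x in M. norm (f x) \<le> C"
  shows "square_integrable M (\<lambda>x. c x *\<^sub>R f x)"
proof (rule square_integrable_dominated[OF assms(1)])
  show "(\<lambda>x. c x *\<^sub>R f x) \<in> borel_measurable M"
    using assms(1,2) unfolding square_integrable_def by (intro borel_measurable_scaleR) auto
  show "AE x in M. norm (c x *\<^sub>R f x) \<le> C * norm (c x)"
    using assms(3) by eventually_elim (simp add: mult_left_mono mult.commute[of C])
qed

lemma norm_scaleR_add_scaleR_le:
  fixes a E :: "'b::real_normed_vector"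
  assumes "\<bar>e\<bar> \<le> s" "norm E \<le> s" "\<bar>b\<bar> \<le> C" "norm a \<le> C"
  shows "norm (e *\<^sub>R a + b *\<^sub>R E) \<le> s * (2 * C)"
proof -
  have "norm (e *\<^sub>R a + b *\<^sub>R E) \<le> \<bar>e\<bar> * norm a + \<bar>b\<bar> * norm E"
    using norm_triangle_ineq[of "e *\<^sub>R a" "b *\<^sub>R E"] by simp
  also have "\<dots> \<le> s * C + C * s"
    using assms by (intro add_mono mult_mono) auto
  finally show ?thesis by (simp add: algebra_simps)
qed

lemma integral_completed_square_nonneg:
  fixes A \<zeta> :: "'x \<Rightarrow> real" and P Q :: "'x \<Rightarrow> 'b::real_inner"
  assumes "integrable M (\<lambda>x. (A x * (norm (P x))\<^sup>2 - 2 * A x * (P x \<bullet> Q x)) * \<zeta> x)"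
    and "integrable M (\<lambda>x. A x * (norm (Q x))\<^sup>2 * \<zeta> x)"
    and "AE x in M. 0 \<le> A x" and "\<And>x. 0 \<le> \<zeta> x"
  shows "0 \<le> (\<integral>x. (A x * (norm (P x))\<^sup>2 - 2 * A x * (P x \<bullet> Q x)) * \<zeta> x \<partial>M)
    + (\<integral>x. A x * (norm (Q x))\<^sup>2 * \<zeta> x \<partial>M)"
proof -
  have "(\<integral>x. (A x * (norm (P x))\<^sup>2 - 2 * A x * (P x \<bullet> Q x)) * \<zeta> x \<partial>M)
      + (\<integral>x. A x * (norm (Q x))\<^sup>2 * \<zeta> x \<partial>M)
      = (\<integral>x. A x * \<zeta> x * (norm (P x - Q x))\<^sup>2 \<partial>M)"
    using assms(1,2)
    by (simp add: Bochner_Integration.integral_add[symmetric] power2_norm_eq_inner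
        inner_commute algebra_simps)
  also have "0 \<le> \<dots>"
    using assms(3,4) by (intro integral_nonneg_AE) (auto elim!: eventually_mono)
  finally show ?thesis .
qed

lemma AE_lebesgue_onI: "(\<And>x. x \<in> S \<Longrightarrow> P x) \<Longrightarrow> AE x in lebesgue_on S. P x"
  by (rule AE_I2) simp

lemma H10_square_integrable:
  assumes "H10_with_grad \<Omega> w Dw"
  shows "square_integrable (lebesgue_on \<Omega>) w" "square_integrable (lebesgue_on \<Omega>) Dw"
  using assms unfolding H10_with_grad_def H1_with_grad_def L2_on_def square_integrable_def by auto

context
  fixes \<Omega> :: "'a::euclidean_space set"
  assumes \<Omega>_open: "open \<Omega>" and \<Omega>_bounded: "bounded \<Omega>"
begin

lemma lebesgue_sets_\<Omega>: "\<Omega> \<in> sets lebesgue"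
  using \<Omega>_open by (simp add: borel_open)

lemma finite_measure_\<Omega>: "finite_measure (lebesgue_on \<Omega>)"
  by (rule finite_measure_lebesgue_on[OF bounded_set_imp_lmeasurable[OF \<Omega>_bounded lebesgue_sets_\<Omega>]])

lemma test_fun_measurable:
  assumes "test_fun \<Omega> \<zeta>"
  shows "\<zeta> \<in> borel_measurable (lebesgue_on \<Omega>)" "grad \<zeta> \<in> borel_measurable (lebesgue_on \<Omega>)"
  using assms smooth_fun_measurable[OF _ lebesgue_sets_\<Omega>] unfolding test_fun_def by blast+

lemma test_fun_bounded:
  assumes "test_fun \<Omega> \<zeta>"
  obtains C where "\<And>x. x \<in> \<Omega> \<Longrightarrow> \<bar>\<zeta> x\<bar> \<le> C \<and> norm (grad \<zeta> x) \<le> C"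
  using assms smooth_fun_bounded_on[OF _ \<Omega>_bounded] unfolding test_fun_def by blast

lemma test_fun_square_integrable:
  assumes "test_fun \<Omega> \<zeta>"
  shows "square_integrable (lebesgue_on \<Omega>) \<zeta>" "square_integrable (lebesgue_on \<Omega>) (grad \<zeta>)"
proof -
  obtain C where C: "\<And>x. x \<in> \<Omega> \<Longrightarrow> \<bar>\<zeta> x\<bar> \<le> C \<and> norm (grad \<zeta> x) \<le> C"
    using test_fun_bounded[OF assms] by blast
  show "square_integrable (lebesgue_on \<Omega>) \<zeta>" "square_integrable (lebesgue_on \<Omega>) (grad \<zeta>)"
    using C test_fun_measurable[OF assms]
    by (auto intro!: square_integrable_bounded[OF finite_measure_\<Omega>, where C = C] AE_lebesgue_onI)
qed

lemma test_fun_scaleR_square_integrable: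
  fixes f :: "'a \<Rightarrow> 'b::{real_normed_vector, second_countable_topology}"
  assumes "test_fun \<Omega> \<zeta>" and "square_integrable (lebesgue_on \<Omega>) f"
  shows "square_integrable (lebesgue_on \<Omega>) (\<lambda>x. \<zeta> x *\<^sub>R f x)"
proof -
  obtain C where "\<And>x. x \<in> \<Omega> \<Longrightarrow> \<bar>\<zeta> x\<bar> \<le> C \<and> norm (grad \<zeta> x) \<le> C"
    using test_fun_bounded[OF assms(1)] by blast
  then show ?thesis
    using test_fun_measurable[OF assms(1)]
    by (auto intro!: square_integrable_scaleR_bounded_left[OF assms(2)] AE_lebesgue_onI)
qed

lemma scaleR_grad_test_fun_square_integrable:
  assumes "test_fun \<Omega> \<zeta>" and "square_integrable (lebesgue_on \<Omega>) c"
  shows "square_integrable (lebesgue_on \<Omega>) (\<lambda>x. c x *\<^sub>R grad \<zeta> x)"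
proof -
  obtain C where "\<And>x. x \<in> \<Omega> \<Longrightarrow> \<bar>\<zeta> x\<bar> \<le> C \<and> norm (grad \<zeta> x) \<le> C"
    using test_fun_bounded[OF assms(1)] by blast
  then show ?thesis
    using test_fun_measurable[OF assms(1)]
    by (auto intro!: square_integrable_scaleR_bounded_right[OF assms(2)] AE_lebesgue_onI)
qed

lemma H10_approximation:
  assumes "H10_with_grad \<Omega> w Dw"
  obtains z s where "\<And>n. test_fun \<Omega> (z n)" "\<And>n. square_integrable (lebesgue_on \<Omega>) (s n)"
    "(\<lambda>n. \<integral>x. (s n x)\<^sup>2 \<partial>lebesgue_on \<Omega>) \<longlonglongrightarrow> 0"
    "\<And>n x. \<bar>z n x - w x\<bar> \<le> s n x" "\<And>n x. norm (grad (z n) x - Dw x) \<le> s n x"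
proof -
  obtain z where z: "\<And>n. test_fun \<Omega> (z n)" and
    lim: "(\<lambda>n. \<integral>x. (z n x - w x)\<^sup>2 + (norm (grad (z n) x - Dw x))\<^sup>2 \<partial>lebesgue_on \<Omega>) \<longlonglongrightarrow> 0"
    using assms unfolding H10_with_grad_def by blast
  note w = H10_square_integrable[OF assms]
  define s where "s n x = sqrt ((z n x - w x)\<^sup>2 + (norm (grad (z n) x - Dw x))\<^sup>2)" for n x
  have s_sq: "(s n x)\<^sup>2 = (z n x - w x)\<^sup>2 + (norm (grad (z n) x - Dw x))\<^sup>2" for n x
    by (simp add: s_def)
  show ?thesis
  proof (rule that[OF z])
    fix n
    have zn: "square_integrable (lebesgue_on \<Omega>) (\<lambda>x. z n x - w x)"
      "square_integrable (lebesgue_on \<Omega>) (\<lambda>x. grad (z n) x - Dw x)"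
      using test_fun_square_integrable[OF z] w by (auto intro: square_integrable_diff)
    have [measurable]: "(\<lambda>x. z n x - w x) \<in> borel_measurable (lebesgue_on \<Omega>)"
      "(\<lambda>x. grad (z n) x - Dw x) \<in> borel_measurable (lebesgue_on \<Omega>)"
      using zn by (simp_all add: square_integrable_def)
    have "s n \<in> borel_measurable (lebesgue_on \<Omega>)" unfolding s_def[abs_def] by measurable
    with zn show "square_integrable (lebesgue_on \<Omega>) (s n)"
      unfolding square_integrable_def by (simp add: s_sq)
  next
    show "(\<lambda>n. \<integral>x. (s n x)\<^sup>2 \<partial>lebesgue_on \<Omega>) \<longlonglongrightarrow> 0" using lim by (simp add: s_sq)
  next
    fix n x
    show "\<bar>z n x - w x\<bar> \<le> s n x" "norm (grad (z n) x - Dw x) \<le> s n x"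
      by (simp_all add: s_def real_le_rsqrt)
  qed
qed

lemma H10_mult_approximation:
  assumes w: "H10_with_grad \<Omega> w Dw" and \<zeta>: "test_fun \<Omega> \<zeta>"
  obtains y s C where "\<And>n. test_fun \<Omega> (y n)" "\<And>n. square_integrable (lebesgue_on \<Omega>) (s n)"
    "(\<lambda>n. \<integral>x. (s n x)\<^sup>2 \<partial>lebesgue_on \<Omega>) \<longlonglongrightarrow> 0"
    "\<And>n x. x \<in> \<Omega> \<Longrightarrow> \<bar>y n x - w x * \<zeta> x\<bar> \<le> s n x * C"
    "\<And>n x. x \<in> \<Omega> \<Longrightarrow> norm (grad (y n) x - (w x *\<^sub>R grad \<zeta> x + \<zeta> x *\<^sub>R Dw x)) \<le> s n x * C"
proof -
  obtain z s where z: "\<And>n. test_fun \<Omega> (z n)" and s: "\<And>n. square_integrable (lebesgue_on \<Omega>) (s n)"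
    and s_lim: "(\<lambda>n. \<integral>x. (s n x)\<^sup>2 \<partial>lebesgue_on \<Omega>) \<longlonglongrightarrow> 0"
    and zw: "\<And>n x. \<bar>z n x - w x\<bar> \<le> s n x" and Dzw: "\<And>n x. norm (grad (z n) x - Dw x) \<le> s n x"
    using H10_approximation[OF w] by blast
  obtain C where C: "\<And>x. x \<in> \<Omega> \<Longrightarrow> \<bar>\<zeta> x\<bar> \<le> C \<and> norm (grad \<zeta> x) \<le> C"
    using test_fun_bounded[OF \<zeta>] by blast
  show ?thesis
  proof (rule that[of "\<lambda>n x. z n x * \<zeta> x", OF test_fun_mult[OF z \<zeta>] s s_lim])
    fix n x assume x: "x \<in> \<Omega>"
    have "\<bar>z n x - w x\<bar> * \<bar>\<zeta> x\<bar> \<le> s n x * (2 * C)"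
      using C[OF x] zw[of n x] by (intro mult_mono) auto
    then show "\<bar>z n x * \<zeta> x - w x * \<zeta> x\<bar> \<le> s n x * (2 * C)"
      by (simp add: left_diff_distrib[symmetric] abs_mult)
    have "grad (\<lambda>x. z n x * \<zeta> x) x - (w x *\<^sub>R grad \<zeta> x + \<zeta> x *\<^sub>R Dw x)
        = (z n x - w x) *\<^sub>R grad \<zeta> x + \<zeta> x *\<^sub>R (grad (z n) x - Dw x)"
      using z \<zeta> unfolding test_fun_def by (simp add: grad_mult algebra_simps)
    also have "norm \<dots> \<le> s n x * (2 * C)"
      using zw Dzw C[OF x] by (intro norm_scaleR_add_scaleR_le) auto
    finally show "norm (grad (\<lambda>x. z n x * \<zeta> x) x - (w x *\<^sub>R grad \<zeta> x + \<zeta> x *\<^sub>R Dw x))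
        \<le> s n x * (2 * C)" .
  qed
qed

lemma weak_grad_H10_mult:
  assumes u: "H1_with_grad \<Omega> u Du" and w: "H10_with_grad \<Omega> w Dw" and \<eta>: "test_fun \<Omega> \<eta>"
  shows "integrable (lebesgue_on \<Omega>) (\<lambda>x. u x *\<^sub>R (w x *\<^sub>R grad \<eta> x + \<eta> x *\<^sub>R Dw x))"
    and "integrable (lebesgue_on \<Omega>) (\<lambda>x. (w x * \<eta> x) *\<^sub>R Du x)"
    and "(\<integral>x. u x *\<^sub>R (w x *\<^sub>R grad \<eta> x + \<eta> x *\<^sub>R Dw x) \<partial>lebesgue_on \<Omega>)
      = - (\<integral>x. (w x * \<eta> x) *\<^sub>R Du x \<partial>lebesgue_on \<Omega>)"
proof -
  let ?M = "lebesgue_on \<Omega>"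
  let ?D = "\<lambda>x. w x *\<^sub>R grad \<eta> x + \<eta> x *\<^sub>R Dw x"
  obtain y s C where y: "\<And>n. test_fun \<Omega> (y n)" and s: "\<And>n. square_integrable ?M (s n)"
    and s_lim: "(\<lambda>n. \<integral>x. (s n x)\<^sup>2 \<partial>?M) \<longlonglongrightarrow> 0"
    and yw: "\<And>n x. x \<in> \<Omega> \<Longrightarrow> \<bar>y n x - w x * \<eta> x\<bar> \<le> s n x * C"
    and Dyw: "\<And>n x. x \<in> \<Omega> \<Longrightarrow> norm (grad (y n) x - ?D x) \<le> s n x * C"
    using H10_mult_approximation[OF w \<eta>] by blast
  have u_L2: "square_integrable ?M u" "square_integrable ?M Du"
    using u unfolding H1_with_grad_def L2_on_def square_integrable_def by auto
  have [measurable]: "u \<in> borel_measurable ?M" "Du \<in> borel_measurable ?M"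
    "w \<in> borel_measurable ?M" "Dw \<in> borel_measurable ?M"
    "\<eta> \<in> borel_measurable ?M" "grad \<eta> \<in> borel_measurable ?M"
    using u_L2 H10_square_integrable[OF w] test_fun_measurable[OF \<eta>]
    by (auto simp: square_integrable_def)
  have parts: "integrable ?M (\<lambda>x. u x *\<^sub>R grad (y n) x)" "integrable ?M (\<lambda>x. y n x *\<^sub>R Du x)"
    "(\<integral>x. u x *\<^sub>R grad (y n) x \<partial>?M) = - (\<integral>x. y n x *\<^sub>R Du x \<partial>?M)" for n
    using u y unfolding H1_with_grad_def weak_grad_def by blast+
  have dom_grad: "AE x in ?M. norm (u x *\<^sub>R grad (y n) x - u x *\<^sub>R ?D x) \<le> s n x * (C * \<bar>u x\<bar>)" for n
  proof (rule AE_lebesgue_onI)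
    fix x assume "x \<in> \<Omega>"
    then have "\<bar>u x\<bar> * norm (grad (y n) x - ?D x) \<le> \<bar>u x\<bar> * (s n x * C)"
      using Dyw by (intro mult_left_mono) auto
    then show "norm (u x *\<^sub>R grad (y n) x - u x *\<^sub>R ?D x) \<le> s n x * (C * \<bar>u x\<bar>)"
      unfolding scaleR_diff_right[symmetric] norm_scaleR by (simp add: algebra_simps)
  qed
  have k_grad: "square_integrable ?M (\<lambda>x. C * \<bar>u x\<bar>)"
    by (rule square_integrable_dominated[OF u_L2(1), where C = "\<bar>C\<bar>"]) (auto simp: abs_mult)
  have "(\<lambda>x. u x *\<^sub>R ?D x) \<in> borel_measurable ?M" by measurable
  note lim_grad = tendsto_integral_L2_dominated[OF parts(1) this s s_lim k_grad dom_grad]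
  have dom_Du: "AE x in ?M. norm (y n x *\<^sub>R Du x - (w x * \<eta> x) *\<^sub>R Du x) \<le> s n x * (C * norm (Du x))" for n
    using yw by (intro AE_lebesgue_onI)
      (simp add: scaleR_diff_left[symmetric] mult_right_mono mult.assoc[symmetric])
  have k_Du: "square_integrable ?M (\<lambda>x. C * norm (Du x))"
    by (rule square_integrable_dominated[OF u_L2(2), where C = "\<bar>C\<bar>"]) (auto simp: abs_mult)
  have "(\<lambda>x. (w x * \<eta> x) *\<^sub>R Du x) \<in> borel_measurable ?M" by measurable
  note lim_Du = tendsto_integral_L2_dominated[OF parts(2) this s s_lim k_Du dom_Du]
  show "integrable ?M (\<lambda>x. u x *\<^sub>R ?D x)" "integrable ?M (\<lambda>x. (w x * \<eta> x) *\<^sub>R Du x)"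
    by (fact lim_grad(1), fact lim_Du(1))
  have "(\<lambda>n. \<integral>x. u x *\<^sub>R grad (y n) x \<partial>?M) \<longlonglongrightarrow> - (\<integral>x. (w x * \<eta> x) *\<^sub>R Du x \<partial>?M)"
    unfolding parts(3) by (rule tendsto_minus[OF lim_Du(2)])
  with lim_grad(2) show "(\<integral>x. u x *\<^sub>R ?D x \<partial>?M) = - (\<integral>x. (w x * \<eta> x) *\<^sub>R Du x \<partial>?M)"
    by (rule LIMSEQ_unique)
qed

lemma weak_grad_square:
  assumes w: "H10_with_grad \<Omega> w Dw"
  shows "weak_grad \<Omega> (\<lambda>x. (w x)\<^sup>2) (\<lambda>x. (2 * w x) *\<^sub>R Dw x)"
  unfolding weak_grad_def
proof (intro allI impI)
  fix \<eta> assume \<eta>: "test_fun \<Omega> \<eta>"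
  let ?M = "lebesgue_on \<Omega>"
  let ?D = "\<lambda>x. w x *\<^sub>R grad \<eta> x + \<eta> x *\<^sub>R Dw x"
  have "H1_with_grad \<Omega> w Dw" using w unfolding H10_with_grad_def by blast
  note parts = weak_grad_H10_mult[OF this w \<eta>]
  have sq: "(\<lambda>x. (w x)\<^sup>2 *\<^sub>R grad \<eta> x) = (\<lambda>x. w x *\<^sub>R ?D x - (w x * \<eta> x) *\<^sub>R Dw x)"
    by (simp add: power2_eq_square algebra_simps)
  have D: "(\<lambda>x. \<eta> x *\<^sub>R (2 * w x) *\<^sub>R Dw x) = (\<lambda>x. 2 *\<^sub>R ((w x * \<eta> x) *\<^sub>R Dw x))"
    by (simp add: algebra_simps)
  have "(\<integral>x. w x *\<^sub>R ?D x - (w x * \<eta> x) *\<^sub>R Dw x \<partial>?M)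
      = (\<integral>x. w x *\<^sub>R ?D x \<partial>?M) - (\<integral>x. (w x * \<eta> x) *\<^sub>R Dw x \<partial>?M)"
    by (rule Bochner_Integration.integral_diff[OF parts(1,2)])
  also have "\<dots> = - (2 *\<^sub>R (\<integral>x. (w x * \<eta> x) *\<^sub>R Dw x \<partial>?M))"
    unfolding parts(3) by (simp add: scaleR_2)
  also have "\<dots> = - (\<integral>x. 2 *\<^sub>R ((w x * \<eta> x) *\<^sub>R Dw x) \<partial>?M)"
    by (simp only: integral_scaleR_right)
  finally show "integrable ?M (\<lambda>x. (w x)\<^sup>2 *\<^sub>R grad \<eta> x) \<and>
        integrable ?M (\<lambda>x. \<eta> x *\<^sub>R (2 * w x) *\<^sub>R Dw x) \<and>
        (\<integral>x. (w x)\<^sup>2 *\<^sub>R grad \<eta> x \<partial>?M) = - (\<integral>x. \<eta> x *\<^sub>R (2 * w x) *\<^sub>R Dw x \<partial>?M)"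
    unfolding sq D
    using Bochner_Integration.integrable_diff[OF parts(1,2)]
      integrable_scaleR_right[OF parts(2)] by blast
qed

lemma weakly_divergence_free_H10_mult:
  assumes B: "weakly_divergence_free \<Omega> B" "square_integrable (lebesgue_on \<Omega>) B"
    and w: "H10_with_grad \<Omega> w Dw" and \<zeta>: "test_fun \<Omega> \<zeta>"
  shows "(\<integral>x. B x \<bullet> (w x *\<^sub>R grad \<zeta> x + \<zeta> x *\<^sub>R Dw x) \<partial>lebesgue_on \<Omega>) = 0"
proof -
  let ?M = "lebesgue_on \<Omega>"
  let ?D = "\<lambda>x. w x *\<^sub>R grad \<zeta> x + \<zeta> x *\<^sub>R Dw x"
  obtain y s C where y: "\<And>n. test_fun \<Omega> (y n)" and s: "\<And>n. square_integrable ?M (s n)"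
    and s_lim: "(\<lambda>n. \<integral>x. (s n x)\<^sup>2 \<partial>?M) \<longlonglongrightarrow> 0"
    and Dyw: "\<And>n x. x \<in> \<Omega> \<Longrightarrow> norm (grad (y n) x - ?D x) \<le> s n x * C"
    by (rule H10_mult_approximation[OF w \<zeta>]) blast
  have [measurable]: "B \<in> borel_measurable ?M" "w \<in> borel_measurable ?M" "Dw \<in> borel_measurable ?M"
    "\<zeta> \<in> borel_measurable ?M" "grad \<zeta> \<in> borel_measurable ?M"
    using B(2) H10_square_integrable[OF w] test_fun_measurable[OF \<zeta>]
    by (auto simp: square_integrable_def)
  have f: "integrable ?M (\<lambda>x. B x \<bullet> grad (y n) x)" for n
    using test_fun_square_integrable[OF y] by (intro integrable_inner[OF B(2)]) blast
  have dom: "AE x in ?M. norm (B x \<bullet> grad (y n) x - B x \<bullet> ?D x) \<le> s n x * (C * norm (B x))" for n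
  proof (rule AE_lebesgue_onI)
    fix x assume "x \<in> \<Omega>"
    then have "norm (B x) * norm (grad (y n) x - ?D x) \<le> norm (B x) * (s n x * C)"
      using Dyw by (intro mult_left_mono) auto
    then show "norm (B x \<bullet> grad (y n) x - B x \<bullet> ?D x) \<le> s n x * (C * norm (B x))"
      using Cauchy_Schwarz_ineq2[of "B x" "grad (y n) x - ?D x"]
      by (simp add: algebra_simps)
  qed
  have k: "square_integrable ?M (\<lambda>x. C * norm (B x))"
    by (rule square_integrable_dominated[OF B(2), where C = "\<bar>C\<bar>"]) (auto simp: abs_mult)
  have "(\<lambda>x. B x \<bullet> ?D x) \<in> borel_measurable ?M" by measurable
  note tendsto_integral_L2_dominated(2)[OF f this s s_lim k dom]
  moreover have "(\<integral>x. B x \<bullet> grad (y n) x \<partial>?M) = 0" for n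
    using B(1) y unfolding weakly_divergence_free_def by blast
  ultimately show ?thesis
    using LIMSEQ_unique[OF _ tendsto_const] by simp
qed

lemma C1_closure_grad_square_integrable:
  assumes "C1_closure_with_grad \<Omega> f Df"
  shows "square_integrable (lebesgue_on \<Omega>) Df"
proof -
  have cont: "continuous_on (closure \<Omega>) Df"
    using assms unfolding C1_closure_with_grad_def by blast
  have "bounded (Df ` closure \<Omega>)"
    using compact_imp_bounded[OF compact_continuous_image[OF cont]] \<Omega>_bounded by simp
  then obtain C where C: "\<And>x. x \<in> closure \<Omega> \<Longrightarrow> norm (Df x) \<le> C"
    unfolding bounded_iff by blast
  show ?thesis
  proof (rule square_integrable_bounded[OF finite_measure_\<Omega>])
    show "Df \<in> borel_measurable (lebesgue_on \<Omega>)"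
      using continuous_imp_measurable_on_sets_lebesgue[OF continuous_on_subset[OF cont closure_subset]
          lebesgue_sets_\<Omega>] .
    show "AE x in lebesgue_on \<Omega>. norm (Df x) \<le> C"
      using C closure_subset by (auto intro!: AE_lebesgue_onI)
  qed
qed

lemma weighted_grad_integral_identity:
  fixes A w \<zeta> :: "'a \<Rightarrow> real" and D\<phi> D\<phi>0 Dv :: "'a \<Rightarrow> 'a"
  assumes A: "A \<in> borel_measurable (lebesgue_on \<Omega>)" "AE x in lebesgue_on \<Omega>. \<bar>A x\<bar> \<le> \<mu>"
    and div: "weakly_divergence_free \<Omega> (\<lambda>x. A x *\<^sub>R D\<phi> x)"
    and w: "H10_with_grad \<Omega> w (\<lambda>x. D\<phi> x - D\<phi>0 x)"
    and L2: "square_integrable (lebesgue_on \<Omega>) D\<phi>"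
      "square_integrable (lebesgue_on \<Omega>) D\<phi>0" "square_integrable (lebesgue_on \<Omega>) Dv"
    and \<zeta>: "test_fun \<Omega> \<zeta>"
    and energy: "(\<integral>x. A x * (Dv x \<bullet> grad \<zeta> x) \<partial>lebesgue_on \<Omega>)
        = (\<integral>x. A x * (norm (D\<phi> x))\<^sup>2 * \<zeta> x \<partial>lebesgue_on \<Omega>)"
  shows "integrable (lebesgue_on \<Omega>)
      (\<lambda>x. (A x * (norm (D\<phi> x))\<^sup>2 - 2 * A x * (D\<phi> x \<bullet> D\<phi>0 x)) * \<zeta> x)"
    and "integrable (lebesgue_on \<Omega>) (\<lambda>x. A x * (norm (D\<phi>0 x))\<^sup>2 * \<zeta> x)"
    and "- (\<integral>x. A x * (((2 * w x) *\<^sub>R (D\<phi> x - D\<phi>0 x) + Dv x) \<bullet> grad \<zeta> x) \<partial>lebesgue_on \<Omega>)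
      = (\<integral>x. (A x * (norm (D\<phi> x))\<^sup>2 - 2 * A x * (D\<phi> x \<bullet> D\<phi>0 x)) * \<zeta> x \<partial>lebesgue_on \<Omega>)
        + 2 * (\<integral>x. w x * A x * (D\<phi>0 x \<bullet> grad \<zeta> x) \<partial>lebesgue_on \<Omega>)"
proof -
  let ?M = "lebesgue_on \<Omega>"
  have A_L2: "square_integrable ?M (\<lambda>x. A x *\<^sub>R D\<phi> x)" "square_integrable ?M (\<lambda>x. A x *\<^sub>R D\<phi>0 x)"
    "square_integrable ?M (\<lambda>x. A x *\<^sub>R Dv x)"
    using L2 by (auto intro: square_integrable_scaleR_bounded_left[OF _ A])
  have \<zeta>_L2: "square_integrable ?M (\<lambda>x. w x *\<^sub>R grad \<zeta> x)"
    "square_integrable ?M (\<lambda>x. \<zeta> x *\<^sub>R (D\<phi> x - D\<phi>0 x))"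
    "square_integrable ?M (\<lambda>x. \<zeta> x *\<^sub>R D\<phi> x)" "square_integrable ?M (\<lambda>x. \<zeta> x *\<^sub>R D\<phi>0 x)"
    "square_integrable ?M (grad \<zeta>)"
    using L2 H10_square_integrable[OF w] test_fun_square_integrable[OF \<zeta>]
    by (auto intro: test_fun_scaleR_square_integrable scaleR_grad_test_fun_square_integrable \<zeta>)
  define T1 where "T1 x = (A x *\<^sub>R D\<phi> x) \<bullet> (w x *\<^sub>R grad \<zeta> x)" for x
  define T2 where "T2 x = (A x *\<^sub>R D\<phi> x) \<bullet> (\<zeta> x *\<^sub>R (D\<phi> x - D\<phi>0 x))" for x
  define T3 where "T3 x = (A x *\<^sub>R D\<phi>0 x) \<bullet> (w x *\<^sub>R grad \<zeta> x)" for x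
  define T4 where "T4 x = (A x *\<^sub>R Dv x) \<bullet> grad \<zeta> x" for x
  define T5 where "T5 x = (A x *\<^sub>R D\<phi> x) \<bullet> (\<zeta> x *\<^sub>R D\<phi> x)" for x
  define T6 where "T6 x = (A x *\<^sub>R D\<phi>0 x) \<bullet> (\<zeta> x *\<^sub>R D\<phi>0 x)" for x
  have I: "integrable ?M T1" "integrable ?M T2" "integrable ?M T3"
    "integrable ?M T4" "integrable ?M T5" "integrable ?M T6"
    unfolding T1_def[abs_def] T2_def[abs_def] T3_def[abs_def] T4_def[abs_def] T5_def[abs_def] T6_def[abs_def]
    by (intro integrable_inner A_L2 \<zeta>_L2)+
  have "(\<lambda>x. A x * (((2 * w x) *\<^sub>R (D\<phi> x - D\<phi>0 x) + Dv x) \<bullet> grad \<zeta> x))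
      = (\<lambda>x. 2 * T1 x - 2 * T3 x + T4 x)"
    by (simp add: T1_def T3_def T4_def algebra_simps)
  moreover have "(\<lambda>x. (A x * (norm (D\<phi> x))\<^sup>2 - 2 * A x * (D\<phi> x \<bullet> D\<phi>0 x)) * \<zeta> x)
      = (\<lambda>x. 2 * T2 x - T5 x)"
    by (simp add: T2_def T5_def power2_norm_eq_inner algebra_simps)
  moreover have "(\<lambda>x. w x * A x * (D\<phi>0 x \<bullet> grad \<zeta> x)) = T3"
    by (rule ext) (simp add: T3_def algebra_simps)
  moreover have "(\<lambda>x. A x * (norm (D\<phi>0 x))\<^sup>2 * \<zeta> x) = T6"
    by (rule ext) (simp add: T6_def power2_norm_eq_inner algebra_simps)
  moreover have "(\<integral>x. T1 x \<partial>?M) = - (\<integral>x. T2 x \<partial>?M)"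
  proof -
    have "(\<lambda>x. (A x *\<^sub>R D\<phi> x) \<bullet> (w x *\<^sub>R grad \<zeta> x + \<zeta> x *\<^sub>R (D\<phi> x - D\<phi>0 x))) = (\<lambda>x. T1 x + T2 x)"
      by (rule ext) (simp only: T1_def T2_def inner_add_right)
    moreover have "(\<integral>x. (A x *\<^sub>R D\<phi> x) \<bullet> (w x *\<^sub>R grad \<zeta> x + \<zeta> x *\<^sub>R (D\<phi> x - D\<phi>0 x)) \<partial>?M) = 0"
      by (rule weakly_divergence_free_H10_mult[OF div A_L2(1) w \<zeta>])
    ultimately have "(\<integral>x. T1 x + T2 x \<partial>?M) = 0" by simp
    with I(1,2) show ?thesis by simp
  qed
  moreover have "(\<integral>x. T4 x \<partial>?M) = (\<integral>x. T5 x \<partial>?M)"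
    using energy by (simp add: T4_def T5_def power2_norm_eq_inner algebra_simps)
  ultimately show "integrable ?M (\<lambda>x. (A x * (norm (D\<phi> x))\<^sup>2 - 2 * A x * (D\<phi> x \<bullet> D\<phi>0 x)) * \<zeta> x)"
    "integrable ?M (\<lambda>x. A x * (norm (D\<phi>0 x))\<^sup>2 * \<zeta> x)"
    "- (\<integral>x. A x * (((2 * w x) *\<^sub>R (D\<phi> x - D\<phi>0 x) + Dv x) \<bullet> grad \<zeta> x) \<partial>?M)
      = (\<integral>x. (A x * (norm (D\<phi> x))\<^sup>2 - 2 * A x * (D\<phi> x \<bullet> D\<phi>0 x)) * \<zeta> x \<partial>?M)
        + 2 * (\<integral>x. w x * A x * (D\<phi>0 x \<bullet> grad \<zeta> x) \<partial>?M)"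
    using I by simp_all
qed


lemma weighted_grad_identity_and_estimate:
  fixes A w :: "'a \<Rightarrow> real" and D\<phi> D\<phi>0 Dv :: "'a \<Rightarrow> 'a"
  assumes A: "A \<in> borel_measurable (lebesgue_on \<Omega>)" "AE x in lebesgue_on \<Omega>. \<bar>A x\<bar> \<le> \<mu>"
      "AE x in lebesgue_on \<Omega>. 0 \<le> A x"
    and div: "weakly_divergence_free \<Omega> (\<lambda>x. A x *\<^sub>R D\<phi> x)"
    and w: "H10_with_grad \<Omega> w (\<lambda>x. D\<phi> x - D\<phi>0 x)"
    and L2: "square_integrable (lebesgue_on \<Omega>) D\<phi>"
      "square_integrable (lebesgue_on \<Omega>) D\<phi>0" "square_integrable (lebesgue_on \<Omega>) Dv"
    and energy: "\<And>\<zeta>. test_fun \<Omega> \<zeta> \<Longrightarrow> (\<integral>x. A x * (Dv x \<bullet> grad \<zeta> x) \<partial>lebesgue_on \<Omega>)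
        = (\<integral>x. A x * (norm (D\<phi> x))\<^sup>2 * \<zeta> x \<partial>lebesgue_on \<Omega>)"
  shows "(\<forall>\<zeta>. test_fun \<Omega> \<zeta> \<longrightarrow>
        - (\<integral>x. A x * (((2 * w x) *\<^sub>R (D\<phi> x - D\<phi>0 x) + Dv x) \<bullet> grad \<zeta> x) \<partial>lebesgue_on \<Omega>)
        = (\<integral>x. (A x * (norm (D\<phi> x))\<^sup>2 - 2 * A x * (D\<phi> x \<bullet> D\<phi>0 x)) * \<zeta> x \<partial>lebesgue_on \<Omega>)
          + 2 * (\<integral>x. w x * A x * (D\<phi>0 x \<bullet> grad \<zeta> x) \<partial>lebesgue_on \<Omega>)) \<and>
     (\<forall>\<zeta>. test_fun \<Omega> \<zeta> \<and> (\<forall>x. 0 \<le> \<zeta> x) \<longrightarrow>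
        (\<integral>x. A x * (((2 * w x) *\<^sub>R (D\<phi> x - D\<phi>0 x) + Dv x) \<bullet> grad \<zeta> x) \<partial>lebesgue_on \<Omega>)
        \<le> (\<integral>x. A x * (norm (D\<phi>0 x))\<^sup>2 * \<zeta> x \<partial>lebesgue_on \<Omega>)
          - 2 * (\<integral>x. w x * A x * (D\<phi>0 x \<bullet> grad \<zeta> x) \<partial>lebesgue_on \<Omega>))"
proof (intro conjI allI impI)
  fix \<zeta> assume \<zeta>: "test_fun \<Omega> \<zeta>"
  show "- (\<integral>x. A x * (((2 * w x) *\<^sub>R (D\<phi> x - D\<phi>0 x) + Dv x) \<bullet> grad \<zeta> x) \<partial>lebesgue_on \<Omega>)
      = (\<integral>x. (A x * (norm (D\<phi> x))\<^sup>2 - 2 * A x * (D\<phi> x \<bullet> D\<phi>0 x)) * \<zeta> x \<partial>lebesgue_on \<Omega>)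
        + 2 * (\<integral>x. w x * A x * (D\<phi>0 x \<bullet> grad \<zeta> x) \<partial>lebesgue_on \<Omega>)"
    by (rule weighted_grad_integral_identity(3)[OF A(1,2) div w L2 \<zeta> energy[OF \<zeta>]])
next
  fix \<zeta> assume "test_fun \<Omega> \<zeta> \<and> (\<forall>x. 0 \<le> \<zeta> x)"
  then have \<zeta>: "test_fun \<Omega> \<zeta>" and \<zeta>_nonneg: "\<And>x. 0 \<le> \<zeta> x" by auto
  note identity = weighted_grad_integral_identity[OF A(1,2) div w L2 \<zeta> energy[OF \<zeta>]]
  show "(\<integral>x. A x * (((2 * w x) *\<^sub>R (D\<phi> x - D\<phi>0 x) + Dv x) \<bullet> grad \<zeta> x) \<partial>lebesgue_on \<Omega>)
      \<le> (\<integral>x. A x * (norm (D\<phi>0 x))\<^sup>2 * \<zeta> x \<partial>lebesgue_on \<Omega>)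
        - 2 * (\<integral>x. w x * A x * (D\<phi>0 x \<bullet> grad \<zeta> x) \<partial>lebesgue_on \<Omega>)"
    using identity(3) integral_completed_square_nonneg[OF identity(1,2) A(3) \<zeta>_nonneg]
    by linarith
qed
end

theorem lemma2p4:
  fixes \<Omega> :: "'a::euclidean_space set"
    and \<sigma> :: "real \<Rightarrow> real" and ustar :: ereal and \<mu> :: real
    and v \<phi> \<phi>0 :: "'a \<Rightarrow> real" and Dv D\<phi> D\<phi>0 :: "'a \<Rightarrow> 'a"
  assumes dom: "open \<Omega>" "connected \<Omega>" "bounded \<Omega>" "\<Omega> \<noteq> {}"
    and sig: "sigma_hyps \<sigma> ustar \<mu>"
    and phi0: "C1_closure_with_grad \<Omega> \<phi>0 D\<phi>0"
    and v_H1: "H1_with_grad \<Omega> v Dv"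
    and v_nonneg: "AE x in lebesgue_on \<Omega>. 0 \<le> v x"
    and phi_H1: "H1_with_grad \<Omega> \<phi> D\<phi>"
    and phi_bc: "H10_with_grad \<Omega> (\<lambda>x. \<phi> x - \<phi>0 x) (\<lambda>x. D\<phi> x - D\<phi>0 x)"
    and eq_phi: "\<And>\<zeta>. test_fun \<Omega> \<zeta> \<Longrightarrow>
        (\<integral>x. a_of \<sigma> ustar (v x) * (D\<phi> x \<bullet> grad \<zeta> x) \<partial>lebesgue_on \<Omega>) = 0"
    and eq_v: "\<And>\<zeta>. test_fun \<Omega> \<zeta> \<Longrightarrow>
        (\<integral>x. a_of \<sigma> ustar (v x) * (Dv x \<bullet> grad \<zeta> x) \<partial>lebesgue_on \<Omega>)
        = (\<integral>x. a_of \<sigma> ustar (v x) * (norm (D\<phi> x))\<^sup>2 * \<zeta> x \<partial>lebesgue_on \<Omega>)"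
  defines "\<psi> \<equiv> (\<lambda>x. (\<phi> x - \<phi>0 x)\<^sup>2 + v x)"
  shows "\<exists>D\<psi>. weak_grad \<Omega> \<psi> D\<psi> \<and>
     (\<forall>\<zeta>. test_fun \<Omega> \<zeta> \<longrightarrow>
        - (\<integral>x. a_of \<sigma> ustar (v x) * (D\<psi> x \<bullet> grad \<zeta> x) \<partial>lebesgue_on \<Omega>)
        = (\<integral>x. (a_of \<sigma> ustar (v x) * (norm (D\<phi> x))\<^sup>2
                 - 2 * a_of \<sigma> ustar (v x) * (D\<phi> x \<bullet> D\<phi>0 x)) * \<zeta> x \<partial>lebesgue_on \<Omega>)
          + 2 * (\<integral>x. (\<phi> x - \<phi>0 x) * a_of \<sigma> ustar (v x) * (D\<phi>0 x \<bullet> grad \<zeta> x) \<partial>lebesgue_on \<Omega>)) \<and>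
     (\<forall>\<zeta>. test_fun \<Omega> \<zeta> \<and> (\<forall>x. 0 \<le> \<zeta> x) \<longrightarrow>
        (\<integral>x. a_of \<sigma> ustar (v x) * (D\<psi> x \<bullet> grad \<zeta> x) \<partial>lebesgue_on \<Omega>)
        \<le> (\<integral>x. a_of \<sigma> ustar (v x) * (norm (D\<phi>0 x))\<^sup>2 * \<zeta> x \<partial>lebesgue_on \<Omega>)
          - 2 * (\<integral>x. (\<phi> x - \<phi>0 x) * a_of \<sigma> ustar (v x) * (D\<phi>0 x \<bullet> grad \<zeta> x) \<partial>lebesgue_on \<Omega>))"
proof -
  let ?M = "lebesgue_on \<Omega>"
  note \<Omega> = dom(1,3)
  have A_meas: "(\<lambda>x. a_of \<sigma> ustar (v x)) \<in> borel_measurable ?M"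
    using v_H1 measurable_compose[OF _ a_of_measurable[OF sig]]
    unfolding H1_with_grad_def L2_on_def by blast
  have A_nonneg: "AE x in ?M. 0 \<le> a_of \<sigma> ustar (v x)"
    and A_abs: "AE x in ?M. \<bar>a_of \<sigma> ustar (v x)\<bar> \<le> \<mu>"
    using v_nonneg by (eventually_elim, simp add: a_of_pos[OF sig] a_of_le_mu[OF sig] less_imp_le)+
  have L2: "square_integrable ?M D\<phi>" "square_integrable ?M D\<phi>0" "square_integrable ?M Dv"
    using phi_H1 v_H1 C1_closure_grad_square_integrable[OF \<Omega> phi0]
    unfolding H1_with_grad_def L2_on_def square_integrable_def by auto
  have div: "weakly_divergence_free \<Omega> (\<lambda>x. a_of \<sigma> ustar (v x) *\<^sub>R D\<phi> x)"
    using eq_phi unfolding weakly_divergence_free_def by simp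
  have "weak_grad \<Omega> \<psi> (\<lambda>x. (2 * (\<phi> x - \<phi>0 x)) *\<^sub>R (D\<phi> x - D\<phi>0 x) + Dv x)"
    unfolding \<psi>_def using v_H1 unfolding H1_with_grad_def
    by (intro weak_grad_add weak_grad_square[OF \<Omega> phi_bc]) simp
  with weighted_grad_identity_and_estimate[OF \<Omega> A_meas A_abs A_nonneg div phi_bc L2 eq_v]
  show ?thesis by blast
qed

end
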